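(* Let $(\Gamma,\tau)$ be a $z$-oriented triangulation of a connected closed $2$-dimensional surface, and let $\Gamma_{\tau}$ be its transition digraph and $\mathcal{X}_{\tau}$ its Markov chain. Then: (1) for every vertex $v$ of $\Gamma_{\tau}$ there exists a closed directed walk of length $3$ in $\Gamma_{\tau}$ passing through $v$; (2) $\mathcal{X}_{\tau}$ is irreducible.
   Context: A triangulation $\Gamma$ of a connected closed surface $M$ (not necessarily orientable) is a closed $2$-cell embedding of a connected finite simple graph in $M$ all of whose faces are triangles. Two edges are adjacent if they are distinct and lie in a common face; two faces are adjacent if distinct and their intersection is an edge. A zigzag is a sequence of edges $(e_i)_{i\in\mathbb{N}}$ such that for every $i$: $e_i,e_{i+1}$ are adjacent, the faces containing $e_i,e_{i+1}$ and $e_{i+1},e_{i+2}$ are adjacent, and $e_i,e_{i+2}$ are disjoint; it is a cyclic sequence, equivalently a cyclic vertex sequence $v_1,\dots,v_n$ with $e_i=v_iv_{i+1}$, traversing $e_i$ from $v_i$ to $v_{i+1}$. $Z^{-1}$ denotes the reversed zigzag. A $z$-orientation $\tau$ is a set of zigzags containing exactly one of $Z,Z^{-1}$ for every zigzag $Z$. Every edge is traversed exactly twice in total by zigzags of $\tau$; it is of type I if the two traversals are in opposite directions, of type II if in the same direction (then it is regarded as directed that way). Each face either has two type I edges and one type II edge (type I face) or three type II edges forming a directed cycle (type II face). Transition digraph and chain: on vertex set $V=\{v_1,\dots,v_n\}$, let $d(v)$ be the number of type I edges at $v$ plus twice the number of type II edges directed out of $v$. Set $p_{ij}=1/d(v_i)$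 if $v_iv_j$ is an edge of type I, $p_{ij}=2/d(v_i)$ if $v_iv_j$ is a type II edge directed from $v_i$ to $v_j$, and $p_{ij}=0$ otherwise. $\Gamma_{\tau}$ is the digraph on $V$ with a directed edge $v_i\to v_j$ exactly when $p_{ij}>0$ (so each type I edge gives two opposite directed edges and each type II edge one directed edge), and $\mathcal{X}_{\tau}$ is the time-homogeneous Markov chain on $V$ with transition matrix $[p_{ij}]$. The length of a walk is the number of edges traversed, with multiplicity. *)

theory Defs
  imports Complex_Main
begin

text \<open>A triangulation of a connected closed surface: every face is a triangle of the graph,
  every edge lies in exactly two faces, the graph is connected, and the link of every
  vertex is a single cycle (the faces around v are connected through edges at v).\<close>

definition is_triangulation :: "'a set \<Rightarrow> 'a set set \<Rightarrow> 'a set set \<Rightarrow> bool" where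
  "is_triangulation V E F \<longleftrightarrow>
     finite V \<and> V \<noteq> {} \<and>
     (\<forall>e\<in>E. \<exists>x y. x \<in> V \<and> y \<in> V \<and> x \<noteq> y \<and> e = {x, y}) \<and>
     (\<forall>f\<in>F. \<exists>x y z. f = {x, y, z} \<and> x \<noteq> y \<and> y \<noteq> z \<and> x \<noteq> z \<and>
                   {x, y} \<in> E \<and> {y, z} \<in> E \<and> {x, z} \<in> E) \<and>
     (\<forall>e\<in>E. card {f\<in>F. e \<subseteq> f} = 2) \<and>
     (\<forall>x\<in>V. \<forall>y\<in>V. (\<lambda>a b. {a, b} \<in> E)\<^sup>*\<^sup>* x y) \<and>
     (\<forall>v\<in>V. (\<exists>f\<in>F. v \<in> f) \<and>
        (\<forall>f\<in>F. \<forall>g\<in>F. v \<in> f \<longrightarrow> v \<in> g \<longrightarrow>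
           (\<lambda>f' g'. f' \<in> F \<and> g' \<in> F \<and> v \<in> f' \<inter> g' \<and> f' \<inter> g' \<in> E)\<^sup>*\<^sup>* f g))"

definition adjacent_edges :: "'a set set \<Rightarrow> 'a set set \<Rightarrow> 'a set \<Rightarrow> 'a set \<Rightarrow> bool" where
  "adjacent_edges E F e e' \<longleftrightarrow> e \<in> E \<and> e' \<in> E \<and> e \<noteq> e' \<and> (\<exists>f\<in>F. e \<subseteq> f \<and> e' \<subseteq> f)"

definition adjacent_faces :: "'a set set \<Rightarrow> 'a set set \<Rightarrow> 'a set \<Rightarrow> 'a set \<Rightarrow> bool" where
  "adjacent_faces E F f g \<longleftrightarrow> f \<in> F \<and> g \<in> F \<and> f \<noteq> g \<and> f \<inter> g \<in> E"

text \<open>A zigzag given by its (bi-infinite) vertex sequence; edge i is {v i, v (i+1)},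
  traversed from v i to v (i+1). The face containing e_i and e_(i+1) is their union.\<close>

definition is_zigzag_seq :: "'a set set \<Rightarrow> 'a set set \<Rightarrow> (int \<Rightarrow> 'a) \<Rightarrow> bool" where
  "is_zigzag_seq E F v \<longleftrightarrow>
     (\<forall>i. let e = (\<lambda>j. {v j, v (j + 1)}) in
        adjacent_edges E F (e i) (e (i + 1)) \<and>
        adjacent_faces E F (e i \<union> e (i + 1)) (e (i + 1) \<union> e (i + 2)) \<and>
        e i \<inter> e (i + 2) = {})"

text \<open>A zigzag is a cyclic sequence: the class of a sequence under index shifts.\<close>

definition zclass :: "(int \<Rightarrow> 'a) \<Rightarrow> (int \<Rightarrow> 'a) set" where
  "zclass v = range (\<lambda>k::int. \<lambda>i. v (i + k))"

definition zigzags :: "'a set set \<Rightarrow> 'a set set \<Rightarrow> (int \<Rightarrow> 'a) set set" where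
  "zigzags E F = {zclass v | v. is_zigzag_seq E F v}"

definition zinv :: "(int \<Rightarrow> 'a) set \<Rightarrow> (int \<Rightarrow> 'a) set" where
  "zinv Z = (\<lambda>v i. v (- i)) ` Z"

definition z_orientation :: "'a set set \<Rightarrow> 'a set set \<Rightarrow> (int \<Rightarrow> 'a) set set \<Rightarrow> bool" where
  "z_orientation E F \<tau> \<longleftrightarrow> \<tau> \<subseteq> zigzags E F \<and>
     (\<forall>Z\<in>zigzags E F. (Z \<in> \<tau> \<or> zinv Z \<in> \<tau>) \<and> (Z \<in> \<tau> \<and> zinv Z \<in> \<tau> \<longrightarrow> Z = zinv Z))"

definition zper :: "(int \<Rightarrow> 'a) \<Rightarrow> nat" where
  "zper v = (LEAST p. p > 0 \<and> (\<forall>i. v (i + int p) = v i))"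

definition ztrav :: "(int \<Rightarrow> 'a) set \<Rightarrow> 'a \<Rightarrow> 'a \<Rightarrow> nat" where
  "ztrav Z x y = (let v = (SOME v. v \<in> Z) in
     card {i \<in> {0..<int (zper v)}. v i = x \<and> v (i + 1) = y})"

definition trav :: "(int \<Rightarrow> 'a) set set \<Rightarrow> 'a \<Rightarrow> 'a \<Rightarrow> nat" where
  "trav \<tau> x y = (\<Sum>Z\<in>\<tau>. ztrav Z x y)"

definition typeI :: "'a set set \<Rightarrow> (int \<Rightarrow> 'a) set set \<Rightarrow> 'a \<Rightarrow> 'a \<Rightarrow> bool" where
  "typeI E \<tau> x y \<longleftrightarrow> {x, y} \<in> E \<and> trav \<tau> x y > 0 \<and> trav \<tau> y x > 0"

definition typeII :: "'a set set \<Rightarrow> (int \<Rightarrow> 'a) set set \<Rightarrow> 'a \<Rightarrow> 'a \<Rightarrow> bool" where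
  "typeII E \<tau> x y \<longleftrightarrow> {x, y} \<in> E \<and> trav \<tau> x y > 0 \<and> trav \<tau> y x = 0"

definition tdeg :: "'a set set \<Rightarrow> (int \<Rightarrow> 'a) set set \<Rightarrow> 'a \<Rightarrow> nat" where
  "tdeg E \<tau> v = card {y. typeI E \<tau> v y} + 2 * card {y. typeII E \<tau> v y}"

definition tprob :: "'a set set \<Rightarrow> (int \<Rightarrow> 'a) set set \<Rightarrow> 'a \<Rightarrow> 'a \<Rightarrow> real" where
  "tprob E \<tau> x y =
     (if typeI E \<tau> x y then 1 / real (tdeg E \<tau> x)
      else if typeII E \<tau> x y then 2 / real (tdeg E \<tau> x) else 0)"

definition tarc :: "'a set set \<Rightarrow> (int \<Rightarrow> 'a) set set \<Rightarrow> 'a \<Rightarrow> 'a \<Rightarrow> bool" where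
  "tarc E \<tau> x y \<longleftrightarrow> tprob E \<tau> x y > 0"

fun mpow :: "'a set \<Rightarrow> ('a \<Rightarrow> 'a \<Rightarrow> real) \<Rightarrow> nat \<Rightarrow> 'a \<Rightarrow> 'a \<Rightarrow> real" where
  "mpow V P 0 x y = (if x = y then 1 else 0)"
| "mpow V P (Suc n) x y = (\<Sum>z\<in>V. mpow V P n x z * P z y)"

definition irreducible_chain :: "'a set \<Rightarrow> ('a \<Rightarrow> 'a \<Rightarrow> real) \<Rightarrow> bool" where
  "irreducible_chain V P \<longleftrightarrow> (\<forall>x\<in>V. \<forall>y\<in>V. \<exists>n. mpow V P n x y > 0)"

end

theory Submission
  imports Defs
begin

(* Every ordered face (x, y, z) starts a zigzag x, y, z, ...: stepping from (a, b, c) to (b, c, d),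
   where d is the vertex opposite to a across the edge bc, permutes the finitely many ordered
   faces, so the orbit of (x, y, z) is periodic and spells out a periodic zigzag. The
   z-orientation contains this zigzag or its reverse, so the edges xy and yz, or zy and yx, are
   traversed in these directions. Comparing the three rotations of a face shows that one of its
   two cyclic orientations consists of arcs of the transition digraph: this is the closed walk of
   length 3 through each vertex. Since every edge lies in a face, its two ends reach each other
   in the digraph, which is therefore strongly connected because the graph is connected; this is
   irreducibility. The traversal counts are sums over the z-orientation, so they need finitely
   many zigzags, which holds because a zigzag is determined by three consecutive vertices. *)

lemma periodic_shift_int:
  fixes w :: "int \<Rightarrow> 'a"
  assumes "\<And>i. w (i + c) = w i"
  shows "w (i + m * c) = w i"
proof (induction m rule: int_induct[where k = 0])
  case (step1 m)
  then show ?case using assms[of "i + m * c"] by (simp add: algebra_simps)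
next
  case (step2 m)
  then show ?case using assms[of "i + (m - 1) * c"] by (simp add: algebra_simps)
qed simp

lemma funpow_mod_Suc:
  assumes "(f ^^ p) x = x" "p > 0"
  shows "(f ^^ nat ((i + 1) mod int p)) x = f ((f ^^ nat (i mod int p)) x)"
proof -
  define r where "r = i mod int p"
  have r: "0 \<le> r" "r < int p" using assms(2) unfolding r_def by simp_all
  have "(i + 1) mod int p = (r + 1) mod int p" unfolding r_def by (simp add: mod_add_left_eq)
  moreover have "r + 1 < int p \<or> r + 1 = int p" using r by linarith
  ultimately consider "r + 1 < int p" "(i + 1) mod int p = r + 1"
    | "r + 1 = int p" "(i + 1) mod int p = 0"
    using r by auto
  then show ?thesis
  proof cases
    case 1
    then show ?thesis using r unfolding r_def[symmetric] by (simp add: nat_add_distrib)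
  next
    case 2
    then have "Suc (nat r) = p" using r by linarith
    have "(f ^^ nat ((i + 1) mod int p)) x = (f ^^ p) x"
      using 2 assms(1) by simp
    also have "\<dots> = f ((f ^^ nat r) x)"
      unfolding \<open>Suc (nat r) = p\<close>[symmetric] by simp
    finally show ?thesis unfolding r_def .
  qed
qed

lemma funpow_in_invariant_set: "f ` A \<subseteq> A \<Longrightarrow> x \<in> A \<Longrightarrow> (f ^^ n) x \<in> A"
  by (induction n) auto

lemma funpow_returns_if_inj_on:
  assumes "finite A" "inj_on f A" "f ` A \<subseteq> A" "x \<in> A"
  shows "\<exists>p>0. (f ^^ p) x = x"
proof -
  note orbit_in_A = funpow_in_invariant_set[OF assms(3,4)]
  have cancel: "(f ^^ m) x = (f ^^ (m + k)) x \<Longrightarrow> x = (f ^^ k) x" for m k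
  proof (induction m)
    case (Suc m)
    then show ?case using inj_onD[OF assms(2)] orbit_in_A by (simp add: funpow_swap1)
  qed simp
  have "\<not> inj_on (\<lambda>n. (f ^^ n) x) {0..card A}"
  proof
    assume "inj_on (\<lambda>n. (f ^^ n) x) {0..card A}"
    then have "card {0..card A} \<le> card A"
      using card_inj_on_le[OF _ _ assms(1)] orbit_in_A by blast
    then show False by simp
  qed
  then obtain m n where "m < n" "(f ^^ m) x = (f ^^ n) x"
    unfolding inj_on_def by (metis linorder_neqE_nat)
  then show ?thesis using cancel[of m "n - m"] by (intro exI[of _ "n - m"]) simp
qed

lemma mpow_nonneg:
  assumes "\<And>a b. P a b \<ge> 0"
  shows "mpow V P n x y \<ge> 0"
  by (induction n arbitrary: y) (auto intro!: sum_nonneg mult_nonneg_nonneg assms)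

lemma mpow_pos_if_rtranclp:
  assumes "finite V" "\<And>a b. P a b \<ge> 0" "(\<lambda>a b. a \<in> V \<and> P a b > 0)\<^sup>*\<^sup>* x y"
  shows "\<exists>n. mpow V P n x y > 0"
  using assms(3)
proof (induction rule: rtranclp_induct)
  case base
  show ?case by (intro exI[of _ 0]) simp
next
  case (step z y)
  obtain n where n: "mpow V P n x z > 0" using step.IH by blast
  have "0 < mpow V P n x z * P z y" using n step.hyps(2) by simp
  also have "\<dots> \<le> (\<Sum>w\<in>V. mpow V P n x w * P w y)"
    using assms(1,2) step.hyps(2) by (intro member_le_sum mult_nonneg_nonneg mpow_nonneg) auto
  finally show ?case by (intro exI[of _ "Suc n"]) simp
qed

lemma rtranclp_triangle:
  assumes "R x y" "R y z" "R z x" "p \<in> {x, y, z}" "q \<in> {x, y, z}"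
  shows "R\<^sup>*\<^sup>* p q"
proof -
  have "R\<^sup>*\<^sup>* x y" "R\<^sup>*\<^sup>* y z" "R\<^sup>*\<^sup>* z x" using assms(1-3) by auto
  moreover from this have "R\<^sup>*\<^sup>* x z" "R\<^sup>*\<^sup>* y x" "R\<^sup>*\<^sup>* z y" by (meson rtranclp_trans)+
  ultimately show ?thesis using assms(4,5) by auto
qed

definition ordered_faces :: "'a set set \<Rightarrow> ('a \<times> 'a \<times> 'a) set" where
  "ordered_faces F = {(a, b, c). {a, b, c} \<in> F \<and> a \<noteq> b \<and> b \<noteq> c \<and> a \<noteq> c}"

definition zigzag_window :: "'a set set \<Rightarrow> 'a \<Rightarrow> 'a \<Rightarrow> 'a \<Rightarrow> 'a \<Rightarrow> bool" where
  "zigzag_window F a b c d \<longleftrightarrow>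
     (a, b, c) \<in> ordered_faces F \<and> (b, c, d) \<in> ordered_faces F \<and> a \<noteq> d"

definition zigzag_next :: "'a set set \<Rightarrow> 'a \<times> 'a \<times> 'a \<Rightarrow> 'a \<times> 'a \<times> 'a" where
  "zigzag_next F = (\<lambda>(a, b, c). (b, c, SOME d. zigzag_window F a b c d))"

lemma ordered_faces_rotate: "(a, b, c) \<in> ordered_faces F \<Longrightarrow> (b, c, a) \<in> ordered_faces F"
  unfolding ordered_faces_def by (auto simp: insert_commute)

lemma zigzag_window_rev: "zigzag_window F a b c d \<Longrightarrow> zigzag_window F d c b a"
  unfolding zigzag_window_def ordered_faces_def by (auto simp: insert_commute)

lemma is_zigzag_seq_iff:
  "is_zigzag_seq E F v \<longleftrightarrow>
     (\<forall>i. adjacent_edges E F {v i, v (i + 1)} {v (i + 1), v (i + 2)} \<and>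
          adjacent_faces E F {v i, v (i + 1), v (i + 2)} {v (i + 1), v (i + 2), v (i + 3)} \<and>
          {v i, v (i + 1)} \<inter> {v (i + 2), v (i + 3)} = {})"
proof -
  have "{a, b} \<union> {b, c} = {a, b, c}" for a b c :: 'a by auto
  then show ?thesis unfolding is_zigzag_seq_def Let_def by (simp add: add.assoc)
qed

lemma zigzag_seq_distinct:
  assumes "is_zigzag_seq E F v"
  shows "v i \<noteq> v (i + 1) \<and> v i \<noteq> v (i + 2) \<and> v i \<noteq> v (i + 3)"
proof -
  have "{v j, v (j + 1)} \<inter> {v (j + 2), v (j + 3)} = {}" for j
    using assms unfolding is_zigzag_seq_iff by blast
  from this[of i] this[of "i - 1"] show ?thesis by (auto simp: algebra_simps)
qed

lemma zigzag_window_of_seq: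
  assumes "is_zigzag_seq E F v"
  shows "zigzag_window F (v i) (v (i + 1)) (v (i + 2)) (v (i + 3))"
proof -
  have "adjacent_faces E F {v i, v (i + 1), v (i + 2)} {v (i + 1), v (i + 2), v (i + 3)}"
    using assms unfolding is_zigzag_seq_iff by blast
  then show ?thesis
    using zigzag_seq_distinct[OF assms, of i] zigzag_seq_distinct[OF assms, of "i + 1"]
      zigzag_seq_distinct[OF assms, of "i + 2"]
    unfolding zigzag_window_def ordered_faces_def adjacent_faces_def by (simp add: add.assoc)
qed

lemma ztrav_zclass_pos:
  assumes periodic: "\<And>i. u (i + int p) = u i" and "p > 0" "u j = a" "u (j + 1) = b"
  shows "ztrav (zclass u) a b > 0"
proof -
  \<comment> \<open>ztrav counts along the representative w chosen by SOME, a shift of u, over the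
      minimal period of w\<close>
  define w where "w = (SOME w. w \<in> zclass u)"
  have "u \<in> zclass u" unfolding zclass_def by (rule range_eqI[of _ _ 0]) simp
  then have "w \<in> zclass u" unfolding w_def by (rule someI[where P = "\<lambda>w. w \<in> zclass u"])
  then obtain k where k: "w = (\<lambda>i. u (i + k))" unfolding zclass_def by blast
  define P where "P = zper w"
  have w_periodic: "w (i + int p) = w i" for i
    unfolding k using periodic[of "i + k"] by (simp add: algebra_simps)
  have "P > 0 \<and> (\<forall>i. w (i + int P) = w i)"
    unfolding P_def zper_def by (rule LeastI[of _ p]) (simp add: w_periodic \<open>p > 0\<close>)
  then have P: "P > 0" "\<And>i. w (i + int P) = w i" by simp_all
  define j' where "j' = (j - k) mod int P"
  define m where "m = (j - k) div int P"
  have j': "0 \<le> j'" "j' < int P" "j - k = j' + m * int P"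
    unfolding j'_def m_def using P(1) by simp_all
  have "w j' = w (j' + m * int P)"
    using periodic_shift_int[where w = w, OF P(2)] by simp
  also have "\<dots> = a"
    unfolding j'(3)[symmetric] k using assms(3) by simp
  finally have wa: "w j' = a" .
  have "w (j' + 1) = w (j' + 1 + m * int P)"
    using periodic_shift_int[where w = w, OF P(2)] by simp
  also have "j' + 1 + m * int P = j - k + 1"
    using j'(3) by simp
  also have "w (j - k + 1) = b"
    unfolding k using assms(4) by (simp add: add.commute add.left_commute)
  finally have wb: "w (j' + 1) = b" .
  have "j' \<in> {i \<in> {0..<int P}. w i = a \<and> w (i + 1) = b}"
    using j'(1,2) wa wb by simp
  moreover have "finite {i \<in> {0..<int P}. w i = a \<and> w (i + 1) = b}"
    by (rule finite_subset[of _ "{0..<int P}"]) auto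
  ultimately have "card {i \<in> {0..<int P}. w i = a \<and> w (i + 1) = b} > 0"
    using card_gt_0_iff by blast
  then show ?thesis
    unfolding ztrav_def Let_def w_def[symmetric] P_def[symmetric] .
qed

lemma zinv_zclass: "zinv (zclass s) = zclass (\<lambda>i. s (- i))"
proof -
  have "zinv (zclass s) = range (\<lambda>k i. s (- i + k))"
    unfolding zinv_def zclass_def image_comp by (simp add: comp_def)
  also have "\<dots> = (\<lambda>k i. s (- i + k)) ` range uminus"
    by simp
  also have "\<dots> = zclass (\<lambda>i. s (- i))"
    unfolding zclass_def image_comp by (simp add: comp_def algebra_simps)
  finally show ?thesis .
qed

locale triangulation =
  fixes V :: "'a set" and E F :: "'a set set"
  assumes is_triangulation: "is_triangulation V E F"
begin

lemma finite_vertices: "finite V"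
  using is_triangulation unfolding is_triangulation_def by (elim conjE)

lemma edge_vertices:
  assumes "{a, b} \<in> E"
  shows "a \<in> V \<and> b \<in> V"
proof -
  have "\<forall>e\<in>E. \<exists>x y. x \<in> V \<and> y \<in> V \<and> x \<noteq> y \<and> e = {x, y}"
    using is_triangulation unfolding is_triangulation_def by (elim conjE)
  then obtain x y where "x \<in> V" "y \<in> V" "{a, b} = {x, y}"
    using assms by blast
  then show ?thesis by (auto simp: doubleton_eq_iff)
qed

lemma connected: "x \<in> V \<Longrightarrow> y \<in> V \<Longrightarrow> (\<lambda>a b. {a, b} \<in> E)\<^sup>*\<^sup>* x y"
  using is_triangulation unfolding is_triangulation_def by (elim conjE) blast

lemma vertex_in_face: "v \<in> V \<Longrightarrow> \<exists>f\<in>F. v \<in> f"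
  using is_triangulation unfolding is_triangulation_def by (elim conjE) metis

lemma faces_on_edge: "e \<in> E \<Longrightarrow> card {f\<in>F. e \<subseteq> f} = 2"
  using is_triangulation unfolding is_triangulation_def by (elim conjE) blast

lemma face_is_triangle:
  "f \<in> F \<Longrightarrow> \<exists>x y z. f = {x, y, z} \<and> x \<noteq> y \<and> y \<noteq> z \<and> x \<noteq> z \<and>
     {x, y} \<in> E \<and> {y, z} \<in> E \<and> {x, z} \<in> E"
  using is_triangulation unfolding is_triangulation_def by (elim conjE) blast

lemma face_ordered: "f \<in> F \<Longrightarrow> \<exists>x y z. f = {x, y, z} \<and> (x, y, z) \<in> ordered_faces F"
  using face_is_triangle unfolding ordered_faces_def by fastforce

lemma face_edge:
  assumes "f \<in> F" "p \<in> f" "q \<in> f" "p \<noteq> q"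
  shows "{p, q} \<in> E"
proof -
  obtain x y z where "f = {x, y, z}" "{x, y} \<in> E" "{y, z} \<in> E" "{x, z} \<in> E"
    using face_is_triangle[OF assms(1)] by blast
  then show ?thesis using assms(2-4) by (auto simp: insert_commute)
qed

lemma face_edges:
  "(a, b, c) \<in> ordered_faces F \<Longrightarrow> {a, b} \<in> E \<and> {b, c} \<in> E \<and> {a, c} \<in> E"
  unfolding ordered_faces_def by (auto intro: face_edge)

lemma face_card: "f \<in> F \<Longrightarrow> card f = 3"
  using face_ordered unfolding ordered_faces_def by fastforce

lemma finite_ordered_faces: "finite (ordered_faces F)"
proof (rule finite_subset)
  show "ordered_faces F \<subseteq> V \<times> V \<times> V"
    using face_edges edge_vertices by fast
  show "finite (V \<times> V \<times> V)"
    using finite_vertices by simp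
qed

lemma faces_on_edge_pair:
  assumes "e \<in> E"
  obtains g h where "g \<noteq> h" "{f\<in>F. e \<subseteq> f} = {g, h}"
  using faces_on_edge[OF assms] card_2_iff that by metis

lemma face_on_edge:
  assumes "e \<in> E"
  obtains f where "f \<in> F" "e \<subseteq> f"
proof -
  obtain g h where "{f\<in>F. e \<subseteq> f} = {g, h}"
    using faces_on_edge_pair[OF assms] .
  then have "g \<in> {f\<in>F. e \<subseteq> f}" by simp
  then show ?thesis using that by blast
qed

lemma other_face_on_edge:
  assumes "e \<in> E" "f \<in> F" "e \<subseteq> f"
  obtains g where "g \<in> F" "e \<subseteq> g" "g \<noteq> f"
proof -
  obtain g h where gh: "g \<noteq> h" "{f\<in>F. e \<subseteq> f} = {g, h}"
    using faces_on_edge_pair[OF assms(1)] .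
  then have "g \<in> F \<and> e \<subseteq> g" "h \<in> F \<and> e \<subseteq> h" by blast+
  then show ?thesis using that gh(1) by metis
qed

lemma at_most_two_faces_on_edge:
  assumes "e \<in> E" "{f, g, h} \<subseteq> F" "e \<subseteq> f" "e \<subseteq> g" "e \<subseteq> h" "f \<noteq> g" "f \<noteq> h"
  shows "g = h"
proof -
  obtain g' h' where "{f\<in>F. e \<subseteq> f} = {g', h'}"
    using faces_on_edge_pair[OF assms(1)] .
  then have "{f, g, h} \<subseteq> {g', h'}" using assms(2-5) by blast
  then show ?thesis using assms(6,7) by auto
qed

lemma zigzag_window_exists:
  assumes "(a, b, c) \<in> ordered_faces F"
  shows "\<exists>d. zigzag_window F a b c d"
proof -
  have abc: "{a, b, c} \<in> F" "a \<noteq> b" "b \<noteq> c" "a \<noteq> c"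
    using assms unfolding ordered_faces_def by simp_all
  obtain g where g: "g \<in> F" "{b, c} \<subseteq> g" "g \<noteq> {a, b, c}"
    using other_face_on_edge[of "{b, c}" "{a, b, c}"] face_edges[OF assms] abc(1) by blast
  have "\<not> g \<subseteq> {b, c}"
    using face_card[OF g(1)] card_mono[of "{b, c}" g] abc(3) by auto
  then obtain d where d: "d \<in> g" "d \<notin> {b, c}" by blast
  have "finite g" using face_card[OF g(1)] by (metis card.infinite zero_neq_numeral)
  then have "g = {b, c, d}"
    using d g(2) face_card[OF g(1)] abc(3) by (intro card_subset_eq[symmetric]) auto
  then show ?thesis
    using abc d g unfolding zigzag_window_def ordered_faces_def by (auto simp: insert_commute)
qed

lemma zigzag_window_unique:
  assumes "zigzag_window F a b c d" "zigzag_window F a b c d'"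
  shows "d = d'"
proof -
  have faces: "(a, b, c) \<in> ordered_faces F" "(b, c, d) \<in> ordered_faces F"
    "(b, c, d') \<in> ordered_faces F" "a \<noteq> d" "a \<noteq> d'"
    using assms unfolding zigzag_window_def by simp_all
  then have "{a, b, c} \<noteq> {b, c, d}" "{a, b, c} \<noteq> {b, c, d'}"
    unfolding ordered_faces_def by auto
  then have "{b, c, d} = {b, c, d'}"
    using at_most_two_faces_on_edge[of "{b, c}" "{a, b, c}" "{b, c, d}" "{b, c, d'}"]
      face_edges[OF faces(1)] faces(1-3) unfolding ordered_faces_def by simp
  then have "d \<in> {b, c, d'}" by blast
  then show ?thesis using faces(2) unfolding ordered_faces_def by auto
qed

lemma zigzag_window_unique_first:
  "zigzag_window F a b c d \<Longrightarrow> zigzag_window F a' b c d \<Longrightarrow> a = a'"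
  by (rule zigzag_window_unique[OF zigzag_window_rev zigzag_window_rev])

lemma zigzag_window_local:
  assumes "zigzag_window F a b c d"
  shows "adjacent_edges E F {a, b} {b, c} \<and> adjacent_faces E F {a, b, c} {b, c, d} \<and>
    {a, b} \<inter> {c, d} = {}"
proof -
  have faces: "(a, b, c) \<in> ordered_faces F" "(b, c, d) \<in> ordered_faces F" and "a \<noteq> d"
    using assms unfolding zigzag_window_def by simp_all
  then have distinct: "a \<noteq> b" "a \<noteq> c" "a \<noteq> d" "b \<noteq> c" "b \<noteq> d" "c \<noteq> d"
    unfolding ordered_faces_def by simp_all
  have "adjacent_edges E F {a, b} {b, c}"
    unfolding adjacent_edges_def using face_edges[OF faces(1)] faces(1) distinct
    by (intro conjI bexI[of _ "{a, b, c}"]) (auto simp: ordered_faces_def doubleton_eq_iff)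
  moreover have "{a, b, c} \<inter> {b, c, d} = {b, c}" "{a, b, c} \<noteq> {b, c, d}"
    using distinct by auto
  then have "adjacent_faces E F {a, b, c} {b, c, d}"
    using face_edges[OF faces(1)] faces unfolding adjacent_faces_def ordered_faces_def by simp
  moreover have "{a, b} \<inter> {c, d} = {}"
    using distinct by auto
  ultimately show ?thesis by blast
qed

lemma zigzag_seq_of_windows:
  assumes "\<And>i. zigzag_window F (v i) (v (i + 1)) (v (i + 2)) (v (i + 3))"
  shows "is_zigzag_seq E F v"
  unfolding is_zigzag_seq_iff using zigzag_window_local[OF assms] by blast

lemma zigzag_seq_eq:
  assumes "is_zigzag_seq E F v" "is_zigzag_seq E F w" "\<forall>i\<in>{0, 1, 2}. v i = w i"
  shows "v = w"
proof
  fix i :: int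
  have "\<forall>j\<in>{0, 1, 2}. v (i + j) = w (i + j)"
  proof (induction i rule: int_induct[where k = 0])
    case base
    then show ?case using assms(3) by simp
  next
    case (step1 i)
    have "v (i + 3) = w (i + 3)"
      using zigzag_window_of_seq[OF assms(1), of i] zigzag_window_of_seq[OF assms(2), of i] step1.IH
      by (auto intro: zigzag_window_unique)
    then show ?case using step1.IH by (simp add: add.assoc)
  next
    case (step2 i)
    have "v (i - 1) = w (i - 1)"
      using zigzag_window_of_seq[OF assms(1), of "i - 1"]
        zigzag_window_of_seq[OF assms(2), of "i - 1"] step2.IH
      by (auto simp: algebra_simps intro: zigzag_window_unique_first)
    then show ?case using step2.IH by (simp add: algebra_simps)
  qed
  then show "v i = w i" by simp
qed

lemma finite_zigzags: "finite (zigzags E F)"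
proof -
  let ?S = "{v. is_zigzag_seq E F v}"
  have "inj_on (\<lambda>v. (v 0, v 1, v 2)) ?S"
    by (rule inj_onI) (simp add: zigzag_seq_eq)
  moreover have "(\<lambda>v. (v 0, v 1, v 2)) ` ?S \<subseteq> ordered_faces F"
    using zigzag_window_of_seq[of E F _ 0] unfolding zigzag_window_def by auto
  ultimately have "finite ?S"
    using finite_ordered_faces finite_imageD finite_subset by blast
  moreover have "zigzags E F = zclass ` ?S"
    unfolding zigzags_def by blast
  ultimately show ?thesis by simp
qed

lemma zigzag_next_window:
  assumes "(a, b, c) \<in> ordered_faces F"
  obtains d where "zigzag_next F (a, b, c) = (b, c, d)" "zigzag_window F a b c d"
  using someI_ex[OF zigzag_window_exists[OF assms]] that unfolding zigzag_next_def by simp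

lemma zigzag_next_in_ordered_faces: "t \<in> ordered_faces F \<Longrightarrow> zigzag_next F t \<in> ordered_faces F"
  by (metis prod_cases3 zigzag_next_window zigzag_window_def)

lemma inj_on_zigzag_next: "inj_on (zigzag_next F) (ordered_faces F)"
proof (rule inj_onI)
  fix t t' assume "t \<in> ordered_faces F" "t' \<in> ordered_faces F" "zigzag_next F t = zigzag_next F t'"
  moreover obtain a b c a' b' c' where "t = (a, b, c)" "t' = (a', b', c')"
    by (metis prod_cases3)
  ultimately show "t = t'"
    using zigzag_window_unique_first by (metis Pair_inject zigzag_next_window)
qed

(* The first components along the periodic orbit of (x, y, z) under zigzag_next. *)
lemma zigzag_through_face:
  assumes "(x, y, z) \<in> ordered_faces F"
  obtains s p where "is_zigzag_seq E F s" "p > 0" "\<And>i. s (i + int p) = s i"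
    "s 0 = x" "s 1 = y" "s 2 = z"
proof -
  obtain p where p: "p > 0" "(zigzag_next F ^^ p) (x, y, z) = (x, y, z)"
    using funpow_returns_if_inj_on[OF finite_ordered_faces inj_on_zigzag_next _ assms]
      zigzag_next_in_ordered_faces by blast
  define T where "T i = (zigzag_next F ^^ nat (i mod int p)) (x, y, z)" for i
  define s where "s i = fst (T i)" for i
  have T_in: "T i \<in> ordered_faces F" for i
    unfolding T_def using zigzag_next_in_ordered_faces assms by (intro funpow_in_invariant_set) auto
  have T_Suc: "T (i + 1) = zigzag_next F (T i)" for i
    unfolding T_def using funpow_mod_Suc[OF p(2,1)] .
  have T_eq: "T i = (s i, s (i + 1), s (i + 2))" for i
  proof -
    obtain a b c where "T i = (a, b, c)" by (metis prod_cases3)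
    then show ?thesis
      using T_Suc[of i] T_Suc[of "i + 1"] unfolding s_def zigzag_next_def
      by (simp add: add.assoc split: prod.splits)
  qed
  have "zigzag_window F (s i) (s (i + 1)) (s (i + 2)) (s (i + 3))" for i
  proof -
    have "zigzag_next F (s i, s (i + 1), s (i + 2)) = (s (i + 1), s (i + 2), s (i + 3))"
      using T_Suc[of i] T_eq[of i] T_eq[of "i + 1"] by (simp add: add.assoc)
    then show ?thesis
      using zigzag_next_window T_in[of i, unfolded T_eq] by (metis prod.inject)
  qed
  then have "is_zigzag_seq E F s" by (rule zigzag_seq_of_windows)
  moreover have "s (i + int p) = s i" for i
    unfolding s_def T_def by simp
  moreover have "T 0 = (x, y, z)" unfolding T_def by simp
  ultimately show ?thesis using that p(1) T_eq[of 0] by simp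
qed

end

lemma tarc_imp_edge: "tarc E \<tau> a b \<Longrightarrow> {a, b} \<in> E"
  unfolding tarc_def tprob_def typeI_def typeII_def by (auto split: if_splits)

locale z_oriented_triangulation = triangulation +
  fixes \<tau> :: "(int \<Rightarrow> 'a) set set"
  assumes z_orientation: "z_orientation E F \<tau>"
begin

(* Needed because trav sums over \<tau>, and a sum over an infinite set is 0. *)
lemma finite_orientation: "finite \<tau>"
  using z_orientation finite_zigzags finite_subset unfolding z_orientation_def by blast

lemma trav_pos_if_ztrav_pos:
  assumes "Z \<in> \<tau>" "ztrav Z a b > 0"
  shows "trav \<tau> a b > 0"
proof -
  have "ztrav Z a b \<le> trav \<tau> a b"
    unfolding trav_def using assms(1) finite_orientation by (intro member_le_sum) simp_all
  then show ?thesis using assms(2) by simp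
qed

lemma face_traversed:
  assumes "(x, y, z) \<in> ordered_faces F"
  shows "(trav \<tau> x y > 0 \<and> trav \<tau> y z > 0) \<or> (trav \<tau> y x > 0 \<and> trav \<tau> z y > 0)"
proof -
  obtain s p where s: "is_zigzag_seq E F s" "p > 0" "\<And>i. s (i + int p) = s i"
    "s 0 = x" "s 1 = y" "s 2 = z"
    using zigzag_through_face[OF assms] by blast
  have "zclass s \<in> zigzags E F"
    unfolding zigzags_def using s(1) by blast
  then have "zclass s \<in> \<tau> \<or> zinv (zclass s) \<in> \<tau>"
    using z_orientation unfolding z_orientation_def by blast
  then show ?thesis
  proof
    assume "zclass s \<in> \<tau>"
    moreover have "ztrav (zclass s) x y > 0"
      by (rule ztrav_zclass_pos[of s p 0]) (simp_all add: s)
    moreover have "ztrav (zclass s) y z > 0"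
      by (rule ztrav_zclass_pos[of s p 1]) (simp_all add: s)
    ultimately show ?thesis using trav_pos_if_ztrav_pos by blast
  next
    assume "zinv (zclass s) \<in> \<tau>"
    then have reversed: "zclass (\<lambda>i. s (- i)) \<in> \<tau>" by (simp only: zinv_zclass)
    have reversed_periodic: "s (- (i + int p)) = s (- i)" for i
      using s(3)[of "- (i + int p)"] by simp
    have "ztrav (zclass (\<lambda>i. s (- i))) y x > 0"
      by (rule ztrav_zclass_pos[of "\<lambda>i. s (- i)" p "-1", OF reversed_periodic]) (simp_all add: s)
    moreover have "ztrav (zclass (\<lambda>i. s (- i))) z y > 0"
      by (rule ztrav_zclass_pos[of "\<lambda>i. s (- i)" p "-2", OF reversed_periodic]) (simp_all add: s)
    ultimately show ?thesis using reversed trav_pos_if_ztrav_pos by blast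
  qed
qed

lemma tarc_if_trav_pos:
  assumes "{a, b} \<in> E" "trav \<tau> a b > 0"
  shows "tarc E \<tau> a b"
proof -
  have "{y. {a, y} \<in> E} \<subseteq> V" using edge_vertices by blast
  then have fin: "finite {y. typeI E \<tau> a y}" "finite {y. typeII E \<tau> a y}"
    using finite_vertices unfolding typeI_def typeII_def by (auto intro: finite_subset)
  show ?thesis
  proof (cases "trav \<tau> b a > 0")
    case True
    then have "typeI E \<tau> a b" using assms unfolding typeI_def by simp
    moreover from this have "card {y. typeI E \<tau> a y} > 0" using fin(1) card_gt_0_iff by blast
    ultimately show ?thesis unfolding tarc_def tprob_def tdeg_def by simp
  next
    case False
    then have "typeII E \<tau> a b" "\<not> typeI E \<tau> a b"
      using assms unfolding typeI_def typeII_def by simp_all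
    moreover from this have "card {y. typeII E \<tau> a y} > 0" using fin(2) card_gt_0_iff by blast
    ultimately show ?thesis unfolding tarc_def tprob_def tdeg_def by simp
  qed
qed

lemma face_directed_cycle:
  assumes "f \<in> F"
  obtains x y z where "f = {x, y, z}" "tarc E \<tau> x y" "tarc E \<tau> y z" "tarc E \<tau> z x"
proof -
  obtain x y z where f: "f = {x, y, z}" and xyz: "(x, y, z) \<in> ordered_faces F"
    using face_ordered[OF assms] by blast
  have yzx: "(y, z, x) \<in> ordered_faces F" by (rule ordered_faces_rotate[OF xyz])
  have zxy: "(z, x, y) \<in> ordered_faces F" by (rule ordered_faces_rotate[OF yzx])
  have "(trav \<tau> x y > 0 \<and> trav \<tau> y z > 0 \<and> trav \<tau> z x > 0) \<or>
        (trav \<tau> x z > 0 \<and> trav \<tau> z y > 0 \<and> trav \<tau> y x > 0)"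
    using face_traversed[OF xyz] face_traversed[OF yzx] face_traversed[OF zxy] by blast
  moreover have "{x, y} \<in> E" "{y, z} \<in> E" "{z, x} \<in> E" "{x, z} \<in> E" "{z, y} \<in> E" "{y, x} \<in> E"
    using face_edges[OF xyz] by (simp_all add: insert_commute)
  moreover have "f = {x, z, y}" using f by auto
  ultimately show ?thesis
    using that[of x y z] that[of x z y] f tarc_if_trav_pos by blast
qed

lemma three_cycle_through_vertex:
  assumes "v \<in> V"
  shows "\<exists>a b. tarc E \<tau> v a \<and> tarc E \<tau> a b \<and> tarc E \<tau> b v"
proof -
  obtain f where "f \<in> F" "v \<in> f" using vertex_in_face[OF assms] by blast
  moreover obtain x y z where "f = {x, y, z}" "tarc E \<tau> x y" "tarc E \<tau> y z" "tarc E \<tau> z x"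
    using face_directed_cycle[OF \<open>f \<in> F\<close>] .
  ultimately show ?thesis by blast
qed

lemma tarc_connected:
  assumes "x \<in> V" "y \<in> V"
  shows "(tarc E \<tau>)\<^sup>*\<^sup>* x y"
proof -
  have "(tarc E \<tau>)\<^sup>*\<^sup>* a b" if ab: "{a, b} \<in> E" for a b
  proof -
    obtain f where "f \<in> F" "{a, b} \<subseteq> f"
      using face_on_edge[OF ab] .
    moreover obtain x y z where "f = {x, y, z}" "tarc E \<tau> x y" "tarc E \<tau> y z" "tarc E \<tau> z x"
      using face_directed_cycle[OF \<open>f \<in> F\<close>] .
    ultimately show ?thesis using rtranclp_triangle[of "tarc E \<tau>" x y z a b] by auto
  qed
  then have "((tarc E \<tau>)\<^sup>*\<^sup>*)\<^sup>*\<^sup>* x y"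
    using mono_rtranclp[of "\<lambda>a b. {a, b} \<in> E"] connected[OF assms] by blast
  then show ?thesis by simp
qed

lemma irreducible_transition_chain: "irreducible_chain V (tprob E \<tau>)"
  unfolding irreducible_chain_def
proof (intro ballI)
  fix x y assume "x \<in> V" "y \<in> V"
  have "tarc E \<tau> a b \<longrightarrow> a \<in> V \<and> tprob E \<tau> a b > 0" for a b
    using tarc_imp_edge[of E \<tau> a b] edge_vertices[of a b] unfolding tarc_def by blast
  then have "(\<lambda>a b. a \<in> V \<and> tprob E \<tau> a b > 0)\<^sup>*\<^sup>* x y"
    using mono_rtranclp[of "tarc E \<tau>" "\<lambda>a b. a \<in> V \<and> tprob E \<tau> a b > 0"]
      tarc_connected[OF \<open>x \<in> V\<close> \<open>y \<in> V\<close>] by blast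
  moreover have "tprob E \<tau> a b \<ge> 0" for a b
    unfolding tprob_def by simp
  ultimately show "\<exists>n. mpow V (tprob E \<tau>) n x y > 0"
    by (intro mpow_pos_if_rtranclp[OF finite_vertices])
qed

end

theorem proposition1:
  fixes V :: "'a set" and E F :: "'a set set" and \<tau> :: "(int \<Rightarrow> 'a) set set"
  assumes "is_triangulation V E F"
    and "z_orientation E F \<tau>"
  shows "(\<forall>v\<in>V. \<exists>a b. tarc E \<tau> v a \<and> tarc E \<tau> a b \<and> tarc E \<tau> b v)
         \<and> irreducible_chain V (tprob E \<tau>)"
proof -
  interpret z_oriented_triangulation V E F \<tau>
    by (intro z_oriented_triangulation.intro triangulation.intro
        z_oriented_triangulation_axioms.intro assms)
  show ?thesis
    using three_cycle_through_vertex irreducible_transition_chain by blast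
qed

end
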